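(* Let $c>0$, $f_s>0$, let $M,N,K\ge1$ be integers, $T_{\max}=(N-1)/f_s$, $\bm{r}^{\mathrm{mic}}_1,\dots,\bm{r}^{\mathrm{mic}}_M\in\mathbb{R}^3$ with $E_M=\{\bm{r}^{\mathrm{mic}}_m\}$, and $\bm{x}=(x_{m,n})_{1\le m\le M,0\le n\le N-1}\in\mathbb{R}^{MN}$. Let $\lambda>0$ and let $\kappa:\mathbb{R}\to\mathbb{R}$ be continuous and bounded with $\kappa(0)>0$. Define $$\phi=\inf_{t>0}\sum_{n=0}^{N-1}\frac{\kappa(n/f_s)\,\kappa(n/f_s-t)}{4\pi ct},\qquad\mu_m=\sum_{n=0}^{N-1}x_{m,n}\kappa(n/f_s)\quad(1\le m\le M).$$ Then the problem $$\inf_{(\bm{a},\bm{r})\in\mathbb{R}_+^K\times\mathscr{C}^K}\ \frac12\Big\|\bm{x}-\sum_{k=1}^K a_k\gamma(\bm{r}_k)\Big\|_2^2+\lambda\sum_{k=1}^K a_k$$ has at least one solution whenever one of the following holds: (i) $\phi<0$ and $\mu_m\le\frac{\phi}{2\lambda}\|\bm{x}\|_2^2$ for all $m\in\{1,\dots,M\}$; (ii) $\phi\ge0$ and $\mu_m\le0$ for all $m\in\{1,\dots,M\}$.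
   Context: $\mathbb{R}_+=[0,+\infty)$, $\|\cdot\|_2$ Euclidean norm. For $\bm{r}\in\mathbb{R}^3\setminus E_M$, $\gamma(\bm{r})\in\mathbb{R}^{MN}$ with $\gamma_{m,n}(\bm{r})=\dfrac{\kappa\big(n/f_s-\|\bm{r}-\bm{r}^{\mathrm{mic}}_m\|_2/c\big)}{4\pi\|\bm{r}-\bm{r}^{\mathrm{mic}}_m\|_2}$. $\mathscr{C}=\bigcap_{m=1}^M\overline{B(\bm{r}^{\mathrm{mic}}_m,cT_{\max})}\setminus E_M$ (closed Euclidean balls). *)

theory Defs
  imports "HOL-Analysis.Analysis"
begin

text \<open>Microphones are indexed by m in {1..M}, time samples by n in {0..<N},
  sources by k in {1..K}.  Signals x are functions nat => nat => real
  (x m n = x_{m,n}).\<close>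

definition Tmax :: "real \<Rightarrow> nat \<Rightarrow> real" where
  "Tmax fs N = (real N - 1) / fs"

definition EM :: "(nat \<Rightarrow> real^3) \<Rightarrow> nat \<Rightarrow> (real^3) set" where
  "EM mic M = mic ` {1..M}"

definition gam :: "(real \<Rightarrow> real) \<Rightarrow> real \<Rightarrow> real \<Rightarrow> (nat \<Rightarrow> real^3)
    \<Rightarrow> real^3 \<Rightarrow> nat \<Rightarrow> nat \<Rightarrow> real" where
  "gam \<kappa> c fs mic r m n =
     \<kappa> (real n / fs - norm (r - mic m) / c) / (4 * pi * norm (r - mic m))"

definition Cset :: "real \<Rightarrow> real \<Rightarrow> nat \<Rightarrow> (nat \<Rightarrow> real^3) \<Rightarrow> nat \<Rightarrow> (real^3) set" where
  "Cset c fs N mic M = (\<Inter>m\<in>{1..M}. cball (mic m) (c * Tmax fs N)) - EM mic M"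

definition sqnorm :: "nat \<Rightarrow> nat \<Rightarrow> (nat \<Rightarrow> nat \<Rightarrow> real) \<Rightarrow> real" where
  "sqnorm M N y = (\<Sum>m\<in>{1..M}. \<Sum>n\<in>{0..<N}. (y m n)\<^sup>2)"

definition objective :: "(real \<Rightarrow> real) \<Rightarrow> real \<Rightarrow> real \<Rightarrow> (nat \<Rightarrow> real^3)
    \<Rightarrow> nat \<Rightarrow> nat \<Rightarrow> nat \<Rightarrow> (nat \<Rightarrow> nat \<Rightarrow> real) \<Rightarrow> real
    \<Rightarrow> (nat \<Rightarrow> real) \<Rightarrow> (nat \<Rightarrow> real^3) \<Rightarrow> real" where
  "objective \<kappa> c fs mic M N K x lam a r =
     1/2 * sqnorm M N (\<lambda>m n. x m n - (\<Sum>k\<in>{1..K}. a k * gam \<kappa> c fs mic (r k) m n))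
     + lam * (\<Sum>k\<in>{1..K}. a k)"

definition feasible :: "real \<Rightarrow> real \<Rightarrow> nat \<Rightarrow> (nat \<Rightarrow> real^3) \<Rightarrow> nat \<Rightarrow> nat
    \<Rightarrow> (nat \<Rightarrow> real) \<Rightarrow> (nat \<Rightarrow> real^3) \<Rightarrow> bool" where
  "feasible c fs N mic M K a r \<longleftrightarrow>
     (\<forall>k\<in>{1..K}. a k \<ge> 0 \<and> r k \<in> Cset c fs N mic M)"

definition phi :: "(real \<Rightarrow> real) \<Rightarrow> real \<Rightarrow> real \<Rightarrow> nat \<Rightarrow> real" where
  "phi \<kappa> c fs N = (INF t\<in>{0<..}.
      (\<Sum>n\<in>{0..<N}. \<kappa> (real n / fs) * \<kappa> (real n / fs - t) / (4 * pi * c * t)))"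

definition mu :: "(real \<Rightarrow> real) \<Rightarrow> real \<Rightarrow> nat \<Rightarrow> (nat \<Rightarrow> nat \<Rightarrow> real) \<Rightarrow> nat \<Rightarrow> real" where
  "mu \<kappa> fs N x m = (\<Sum>n\<in>{0..<N}. x m n * \<kappa> (real n / fs))"

end

theory Submission
  imports Defs
begin

(*
  Write the amplitudes as a_k = beta_k * w(r_k) with w(r) = prod_m |r - r_m^mic|. Then
  a_k gamma(r_k) = beta_k (w gamma)(r_k), and w gamma extends continuously to the microphones,
  so the objective becomes a continuous function of (beta, r) on [0,inf)^K x D^K, where D is the
  compact intersection of the balls. At a microphone, w gamma correlates positively with the
  samples kappa(n/fs); together with the penalty lam * sum beta_k w(r_k) this bounds sum beta_k on
  the sublevel set of the trivial point beta = 0, so the lifted problem has a minimiser.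
  Finally, a source of that minimiser sitting at a microphone can be deleted without increasing
  the objective: since phi <= sum_n gamma_mn(r) kappa(n/fs) for every admissible r, the bound on
  mu_m makes the residual of the remaining sources negatively correlated with it.
*)

lemma bdd_below_divide_pos:
  fixes g :: "real \<Rightarrow> real"
  assumes "isCont g 0" and "0 < g 0" and "bdd_below (range g)"
  shows "bdd_below ((\<lambda>t. g t / t) ` {0<..})"
proof -
  obtain \<tau> where \<tau>: "\<tau> > 0" "\<And>s. s \<noteq> 0 \<Longrightarrow> dist s 0 < \<tau> \<Longrightarrow> 0 < g s"
    using order_tendstoD(1)[OF assms(1)[unfolded isCont_def] assms(2)]
    unfolding eventually_at by blast
  obtain B0 where "\<And>s. B0 \<le> g s"
    using assms(3) by (auto simp: bdd_below_def)
  define B where "B = min B0 0"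
  have B: "B \<le> g s" "B \<le> 0" for s
    unfolding B_def using \<open>\<And>s. B0 \<le> g s\<close>[of s] by auto
  have "B / \<tau> \<le> g s / s" if "s > 0" for s
  proof (cases "s < \<tau>")
    case True
    then have "0 < g s / s" using \<tau> that by auto
    moreover have "B / \<tau> \<le> 0" using B \<tau> by (simp add: divide_nonpos_pos)
    ultimately show ?thesis by linarith
  next
    case False
    then have "B / \<tau> \<le> B / s" using B \<tau> by (intro divide_left_mono_neg) auto
    also have "\<dots> \<le> g s / s" using B that by (simp add: divide_right_mono)
    finally show ?thesis .
  qed
  then show ?thesis by (intro bdd_belowI2[of _ "B / \<tau>"]) simp
qed

lemma phi_le:
  fixes \<kappa> :: "real \<Rightarrow> real"
  assumes c: "c > 0" and N: "N \<ge> 1" and cont: "continuous_on UNIV \<kappa>"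
    and bd: "bounded (range \<kappa>)" and "\<kappa> 0 > 0" and "t > 0"
  shows "phi \<kappa> c fs N \<le> (\<Sum>n\<in>{0..<N}. \<kappa> (real n / fs) * \<kappa> (real n / fs - t) / (4 * pi * c * t))"
proof -
  define g where "g s = (\<Sum>n\<in>{0..<N}. \<kappa> (real n / fs) * \<kappa> (real n / fs - s) / (4 * pi * c))" for s
  have quotient: "(\<Sum>n\<in>{0..<N}. \<kappa> (real n / fs) * \<kappa> (real n / fs - s) / (4 * pi * c * s)) = g s / s" for s
    by (simp add: g_def sum_divide_distrib divide_divide_eq_left)
  have "continuous_on UNIV g"
    unfolding g_def using c by (intro continuous_intros continuous_on_compose2[OF cont]) auto
  then have "isCont g 0"
    by (simp add: continuous_on_eq_continuous_at)
  moreover have "0 < g 0"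
  proof -
    have "(\<kappa> 0)\<^sup>2 / (4 * pi * c) \<le> (\<Sum>n\<in>{0..<N}. (\<kappa> (real n / fs))\<^sup>2 / (4 * pi * c))"
      using member_le_sum[of 0 "{0..<N}" "\<lambda>n. (\<kappa> (real n / fs))\<^sup>2 / (4 * pi * c)"] N c by simp
    moreover have "0 < (\<kappa> 0)\<^sup>2 / (4 * pi * c)" using \<open>\<kappa> 0 > 0\<close> c by simp
    ultimately show ?thesis by (simp add: g_def power2_eq_square)
  qed
  moreover have "bdd_below (range g)"
  proof -
    obtain b where b: "\<And>y. \<bar>\<kappa> y\<bar> \<le> b"
      using bd unfolding bounded_iff by auto
    have "- b\<^sup>2 / (4 * pi * c) \<le> \<kappa> u * \<kappa> w / (4 * pi * c)" for u w
    proof -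
      have "\<bar>\<kappa> u * \<kappa> w\<bar> \<le> b * b"
        unfolding abs_mult by (rule mult_mono) (use b order_trans[OF abs_ge_zero b] in auto)
      then have "- b\<^sup>2 \<le> \<kappa> u * \<kappa> w" by (simp add: power2_eq_square abs_le_iff)
      from divide_right_mono[OF this, of "4 * pi * c"] show ?thesis using c by simp
    qed
    then have "real N * (- b\<^sup>2 / (4 * pi * c)) \<le> g s" for s
      unfolding g_def by (rule sum_bounded_below[of "{0..<N}", simplified])
    then show ?thesis unfolding bdd_below_def by blast
  qed
  ultimately have "bdd_below ((\<lambda>s. g s / s) ` {0<..})"
    by (rule bdd_below_divide_pos)
  then show ?thesis
    unfolding phi_def quotient using \<open>t > 0\<close> by (intro cInf_lower) auto
qed

lemma phi_le_sum_gam: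
  fixes \<kappa> :: "real \<Rightarrow> real"
  assumes c: "c > 0" and "N \<ge> 1" and "continuous_on UNIV \<kappa>"
    and "bounded (range \<kappa>)" and "\<kappa> 0 > 0" and r: "r \<noteq> mic m"
  shows "phi \<kappa> c fs N \<le> (\<Sum>n\<in>{0..<N}. gam \<kappa> c fs mic r m n * \<kappa> (real n / fs))"
proof -
  define t where "t = norm (r - mic m) / c"
  have "t > 0" unfolding t_def using c r by simp
  have "(\<Sum>n\<in>{0..<N}. gam \<kappa> c fs mic r m n * \<kappa> (real n / fs))
      = (\<Sum>n\<in>{0..<N}. \<kappa> (real n / fs) * \<kappa> (real n / fs - t) / (4 * pi * c * t))"
    unfolding gam_def t_def using c by (intro sum.cong) (simp_all add: field_simps)
  then show ?thesis
    using phi_le[OF assms(1-5) \<open>t > 0\<close>] by simp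
qed

definition signal_inner ::
    "nat \<Rightarrow> nat \<Rightarrow> (nat \<Rightarrow> nat \<Rightarrow> real) \<Rightarrow> (nat \<Rightarrow> nat \<Rightarrow> real) \<Rightarrow> real" where
  "signal_inner M N y z = (\<Sum>m\<in>{1..M}. \<Sum>n\<in>{0..<N}. y m n * z m n)"

lemma sqnorm_nonneg: "0 \<le> sqnorm M N y"
  unfolding sqnorm_def by (intro sum_nonneg) auto

lemma sqnorm_cong:
  "(\<And>m n. m \<in> {1..M} \<Longrightarrow> n < N \<Longrightarrow> y m n = z m n) \<Longrightarrow> sqnorm M N y = sqnorm M N z"
  unfolding sqnorm_def by (intro sum.cong) auto

lemma abs_le_sqrt_sqnorm:
  assumes "m \<in> {1..M}" and "n < N"
  shows "\<bar>y m n\<bar> \<le> sqrt (sqnorm M N y)"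
proof -
  have "(y m n)\<^sup>2 \<le> (\<Sum>n\<in>{0..<N}. (y m n)\<^sup>2)"
    using assms(2) by (intro member_le_sum) auto
  also have "\<dots> \<le> sqnorm M N y"
    unfolding sqnorm_def using assms(1) by (intro member_le_sum sum_nonneg) auto
  finally show ?thesis
    using real_le_rsqrt[of "\<bar>y m n\<bar>"] by simp
qed

lemma sqnorm_diff:
  "sqnorm M N (\<lambda>m n. y m n - z m n) = sqnorm M N y - 2 * signal_inner M N y z + sqnorm M N z"
  unfolding sqnorm_def signal_inner_def
  by (simp add: power2_diff sum.distrib sum_subtractf sum_distrib_left mult.assoc)

lemma sqnorm_le_diff:
  "signal_inner M N y z \<le> 0 \<Longrightarrow> sqnorm M N y \<le> sqnorm M N (\<lambda>m n. y m n - z m n)"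
  using sqnorm_diff[of M N y z] sqnorm_nonneg[of M N z] by linarith

lemma signal_inner_sum_right:
  "signal_inner M N y (\<lambda>m n. \<Sum>k\<in>A. b k * z k m n) = (\<Sum>k\<in>A. b k * signal_inner M N y (z k))"
  unfolding signal_inner_def sum_distrib_left
  by (simp add: sum_distrib_left mult.left_commute sum.swap[where B = A])

lemma signal_inner_le_of_sqnorm_diff_le:
  assumes "sqnorm M N (\<lambda>m n. x m n - y m n) \<le> R"
  shows "signal_inner M N v y \<le> (\<Sum>m\<in>{1..M}. \<Sum>n\<in>{0..<N}. \<bar>v m n\<bar> * (\<bar>x m n\<bar> + sqrt R))"
proof -
  have "v m n * y m n \<le> \<bar>v m n\<bar> * (\<bar>x m n\<bar> + sqrt R)" if "m \<in> {1..M}" and "n < N" for m n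
  proof -
    have "\<bar>x m n - y m n\<bar> \<le> sqrt R"
      using abs_le_sqrt_sqnorm[OF that, of "\<lambda>m n. x m n - y m n"] real_sqrt_le_mono[OF assms]
      by linarith
    then have "\<bar>y m n\<bar> \<le> \<bar>x m n\<bar> + sqrt R" by arith
    then have "\<bar>v m n\<bar> * \<bar>y m n\<bar> \<le> \<bar>v m n\<bar> * (\<bar>x m n\<bar> + sqrt R)"
      by (rule mult_left_mono) simp
    then show ?thesis by (metis abs_ge_self abs_mult order_trans)
  qed
  then show ?thesis unfolding signal_inner_def by (intro sum_mono) auto
qed

lemma compact_lower_bound_add_multiple:
  fixes f w :: "'a::topological_space \<Rightarrow> real"
  assumes "compact D" and "continuous_on D f" and "continuous_on D w"
    and "\<And>r. r \<in> D \<Longrightarrow> 0 \<le> w r" and "\<And>r. r \<in> D \<Longrightarrow> 0 < f r \<or> 0 < w r"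
  obtains q l where "0 < q" and "0 \<le> l" and "\<And>r. r \<in> D \<Longrightarrow> q \<le> f r + l * w r"
proof (cases "D = {}")
  case True
  then show ?thesis using that[of 1 0] by simp
next
  case False
  have "continuous_on D (\<lambda>r. max (f r) (w r))"
    using assms(2,3) by (intro continuous_intros)
  then obtain r0 where r0: "r0 \<in> D" "\<And>r. r \<in> D \<Longrightarrow> max (f r0) (w r0) \<le> max (f r) (w r)"
    using continuous_attains_inf[OF assms(1) False] by blast
  define q where "q = max (f r0) (w r0)"
  have "0 < q" unfolding q_def using assms(5)[OF r0(1)] by auto
  obtain C where C: "\<And>r. r \<in> D \<Longrightarrow> - C \<le> f r" and "0 \<le> C"
  proof -
    obtain C0 where "\<forall>y\<in>f ` D. norm y \<le> C0"
      using compact_imp_bounded[OF compact_continuous_image[OF assms(2,1)]]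
      unfolding bounded_iff by blast
    then show ?thesis using that[of "max C0 0"] by force
  qed
  define l where "l = (C + q) / q"
  have "0 \<le> l" unfolding l_def using \<open>0 \<le> C\<close> \<open>0 < q\<close> by simp
  have "q \<le> f r + l * w r" if r: "r \<in> D" for r
  proof (cases "q \<le> f r")
    case True
    then show ?thesis using \<open>0 \<le> l\<close> assms(4)[OF r] by (simp add: add_increasing2)
  next
    case False
    then have "q \<le> w r" using r0(2)[OF r] unfolding q_def by linarith
    have "C + q = (C + q) / q * q" using \<open>0 < q\<close> by simp
    also have "\<dots> \<le> l * w r"
      unfolding l_def using \<open>q \<le> w r\<close> \<open>0 \<le> l\<close>[unfolded l_def] by (rule mult_left_mono)
    finally have "C + q \<le> l * w r" .
    then show ?thesis using C[OF r] by linarith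
  qed
  then show ?thesis using that \<open>0 < q\<close> \<open>0 \<le> l\<close> by blast
qed

lemma continuous_on_coordinate [continuous_intros]:
  "continuous_on S (\<lambda>z. z k :: 'b::topological_space)"
  by (rule continuous_on_subset[OF continuous_on_product_coordinates]) auto

lemma compact_PiE_UNIV:
  assumes "\<And>i. compact (S i :: 'b::topological_space set)"
  shows "compact (PiE UNIV S)"
proof -
  have "compactin (product_topology (\<lambda>_. euclidean) UNIV) (PiE UNIV S)"
    using assms by (subst compactin_PiE) auto
  then show ?thesis by (simp add: euclidean_product_topology)
qed

locale source_problem =
  fixes \<kappa> :: "real \<Rightarrow> real" and c fs lam :: real and M N K :: nat
    and mic :: "nat \<Rightarrow> real^3" and x :: "nat \<Rightarrow> nat \<Rightarrow> real"
  assumes c_pos: "c > 0" and M_ge_1: "M \<ge> 1" and N_ge_1: "N \<ge> 1" and lam_pos: "lam > 0"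
    and \<kappa>_continuous: "continuous_on UNIV \<kappa>" and \<kappa>_bounded: "bounded (range \<kappa>)"
    and \<kappa>_0_pos: "\<kappa> 0 > 0"
    and Cset_nonempty: "Cset c fs N mic M \<noteq> {}"
begin

definition E :: "(real^3) set" where
  "E = EM mic M"

definition D :: "(real^3) set" where
  "D = (\<Inter>m\<in>{1..M}. cball (mic m) (c * Tmax fs N))"

definition weight :: "real^3 \<Rightarrow> real" where
  "weight r = (\<Prod>p\<in>E. norm (r - p))"

definition weighted_gam :: "real^3 \<Rightarrow> nat \<Rightarrow> nat \<Rightarrow> real" where
  "weighted_gam r m n =
     \<kappa> (real n / fs - norm (r - mic m) / c) * (\<Prod>p\<in>E - {mic m}. norm (r - p)) / (4 * pi)"

definition kappa_signal :: "nat \<Rightarrow> nat \<Rightarrow> real" where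
  "kappa_signal m n = \<kappa> (real n / fs)"

definition lifted_feasible :: "(nat \<Rightarrow> real) \<Rightarrow> (nat \<Rightarrow> real^3) \<Rightarrow> bool" where
  "lifted_feasible \<beta> \<rho> \<longleftrightarrow> (\<forall>k\<in>{1..K}. 0 \<le> \<beta> k \<and> \<rho> k \<in> D)"

definition lifted_objective :: "(nat \<Rightarrow> real) \<Rightarrow> (nat \<Rightarrow> real^3) \<Rightarrow> real" where
  "lifted_objective \<beta> \<rho> =
     1/2 * sqnorm M N (\<lambda>m n. x m n - (\<Sum>k\<in>{1..K}. \<beta> k * weighted_gam (\<rho> k) m n))
     + lam * (\<Sum>k\<in>{1..K}. \<beta> k * weight (\<rho> k))"

lemma finite_E: "finite E"
  unfolding E_def EM_def by simp

lemma mic_in_E: "m \<in> {1..M} \<Longrightarrow> mic m \<in> E"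
  unfolding E_def EM_def by simp

lemma Cset_eq: "Cset c fs N mic M = D - E"
  unfolding Cset_def D_def E_def by simp

lemma compact_D: "compact D"
proof -
  have "closed D" unfolding D_def by (intro closed_INT) auto
  moreover have "bounded D" unfolding D_def
    by (rule bounded_subset[OF bounded_cball[of "mic 1" "c * Tmax fs N"]]) (use M_ge_1 in auto)
  ultimately show ?thesis by (simp add: compact_eq_bounded_closed)
qed

lemma weight_nonneg: "0 \<le> weight r"
  unfolding weight_def by (simp add: prod_nonneg)

lemma weight_eq_0_iff: "weight r = 0 \<longleftrightarrow> r \<in> E"
  unfolding weight_def using finite_E by (simp add: prod_zero_iff)

lemma weight_pos: "r \<notin> E \<Longrightarrow> 0 < weight r"
  using weight_nonneg weight_eq_0_iff by (metis order_le_less)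

lemma continuous_on_weight: "continuous_on S weight"
  unfolding weight_def by (intro continuous_intros)

lemma continuous_on_weighted_gam: "continuous_on S (\<lambda>r. weighted_gam r m n)"
  unfolding weighted_gam_def using c_pos
  by (intro continuous_intros continuous_on_compose2[OF \<kappa>_continuous]) auto

lemma weight_mult_gam:
  assumes "m \<in> {1..M}" and "r \<notin> E"
  shows "weight r * gam \<kappa> c fs mic r m n = weighted_gam r m n"
proof -
  have "mic m \<in> E" using mic_in_E assms(1) by simp
  then have "weight r = norm (r - mic m) * (\<Prod>p\<in>E - {mic m}. norm (r - p))"
    unfolding weight_def using finite_E by (simp add: prod.remove)
  moreover have "norm (r - mic m) \<noteq> 0" using \<open>mic m \<in> E\<close> assms(2) by auto
  ultimately show ?thesis unfolding gam_def weighted_gam_def by (simp add: field_simps)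
qed

lemma weighted_gam_at_E:
  assumes "p \<in> E"
  shows "weighted_gam p m n =
    (if mic m = p then \<kappa> (real n / fs) * (\<Prod>q\<in>E - {p}. norm (p - q)) / (4 * pi) else 0)"
proof (cases "mic m = p")
  case False
  then have "(\<Prod>q\<in>E - {mic m}. norm (p - q)) = 0"
    using assms finite_E by (subst prod_zero_iff) auto
  then show ?thesis using False unfolding weighted_gam_def by simp
qed (simp add: weighted_gam_def)

lemma kernel_corr_at_E_pos:
  assumes "p \<in> E"
  shows "0 < signal_inner M N kappa_signal (weighted_gam p)"
proof -
  obtain m0 where m0: "m0 \<in> {1..M}" "mic m0 = p" using assms unfolding E_def EM_def by auto
  define P where "P = (\<Prod>q\<in>E - {p}. norm (p - q)) / (4 * pi)"
  have "0 < P" unfolding P_def using finite_E by (intro divide_pos_pos prod_pos) auto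
  have summand: "kappa_signal m n * weighted_gam p m n = (if mic m = p then (\<kappa> (real n / fs))\<^sup>2 * P else 0)" for m n
    unfolding weighted_gam_at_E[OF assms] kappa_signal_def P_def by (simp add: power2_eq_square)
  have "0 < (\<kappa> 0)\<^sup>2 * P" using \<kappa>_0_pos \<open>0 < P\<close> by simp
  also have "\<dots> \<le> (\<Sum>n\<in>{0..<N}. kappa_signal m0 n * weighted_gam p m0 n)"
    using member_le_sum[of 0 "{0..<N}" "\<lambda>n. kappa_signal m0 n * weighted_gam p m0 n"] N_ge_1
    unfolding summand using m0 \<open>0 < P\<close> by simp
  also have "\<dots> \<le> signal_inner M N kappa_signal (weighted_gam p)"
    unfolding signal_inner_def summand using m0 \<open>0 < P\<close>
    by (intro member_le_sum sum_nonneg) auto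
  finally show ?thesis .
qed

lemma kernel_corr_weight_lower_bound:
  obtains q l where "0 < q" and "0 \<le> l"
    and "\<And>r. r \<in> D \<Longrightarrow> q \<le> signal_inner M N kappa_signal (weighted_gam r) + l * weight r"
proof (rule compact_lower_bound_add_multiple[OF compact_D])
  show "continuous_on D (\<lambda>r. signal_inner M N kappa_signal (weighted_gam r))"
    unfolding signal_inner_def by (intro continuous_intros continuous_on_weighted_gam)
  show "0 < signal_inner M N kappa_signal (weighted_gam r) \<or> 0 < weight r" for r
    using kernel_corr_at_E_pos weight_pos by blast
qed (use weight_nonneg continuous_on_weight in auto)

lemma lifted_amplitude_bound:
  obtains B where "0 \<le> B"
    and "\<And>\<beta> \<rho>. lifted_feasible \<beta> \<rho> \<Longrightarrow> lifted_objective \<beta> \<rho> \<le> 1/2 * sqnorm M N x \<Longrightarrow>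
           (\<Sum>k\<in>{1..K}. \<beta> k) \<le> B"
proof -
  obtain q l where q: "0 < q" "0 \<le> l"
    and q_le: "\<And>r. r \<in> D \<Longrightarrow> q \<le> signal_inner M N kappa_signal (weighted_gam r) + l * weight r"
    using kernel_corr_weight_lower_bound by blast
  define F0 where "F0 = 1/2 * sqnorm M N x"
  define C where "C = (\<Sum>m\<in>{1..M}. \<Sum>n\<in>{0..<N}. \<bar>kappa_signal m n\<bar> * (\<bar>x m n\<bar> + sqrt (2 * F0)))"
  have "0 \<le> F0" unfolding F0_def using sqnorm_nonneg by simp
  then have "0 \<le> C" unfolding C_def by (intro sum_nonneg) auto
  have "(\<Sum>k\<in>{1..K}. \<beta> k) \<le> (C + l * (F0 / lam)) / q"
    if feas: "lifted_feasible \<beta> \<rho>" and below: "lifted_objective \<beta> \<rho> \<le> F0" for \<beta> \<rho>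
  proof -
    define y where "y m n = (\<Sum>k\<in>{1..K}. \<beta> k * weighted_gam (\<rho> k) m n)" for m n
    define W where "W = (\<Sum>k\<in>{1..K}. \<beta> k * weight (\<rho> k))"
    have "0 \<le> W" unfolding W_def using feas weight_nonneg
      by (intro sum_nonneg) (auto simp: lifted_feasible_def)
    have obj: "lifted_objective \<beta> \<rho> = 1/2 * sqnorm M N (\<lambda>m n. x m n - y m n) + lam * W"
      unfolding lifted_objective_def y_def W_def ..
    have "0 \<le> lam * W" using lam_pos \<open>0 \<le> W\<close> by simp
    then have "sqnorm M N (\<lambda>m n. x m n - y m n) \<le> 2 * F0"
      using below obj by linarith
    then have y_corr: "signal_inner M N kappa_signal y \<le> C"
      unfolding C_def by (rule signal_inner_le_of_sqnorm_diff_le)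
    have "lam * W \<le> F0"
      using below obj sqnorm_nonneg[of M N "\<lambda>m n. x m n - y m n"] by linarith
    then have "W \<le> F0 / lam"
      using lam_pos by (simp add: pos_le_divide_eq mult.commute)
    then have W_le: "l * W \<le> l * (F0 / lam)"
      using q(2) by (rule mult_left_mono)
    have "q * (\<Sum>k\<in>{1..K}. \<beta> k) = (\<Sum>k\<in>{1..K}. \<beta> k * q)"
      by (simp add: sum_distrib_left mult.commute)
    also have "\<dots> \<le> (\<Sum>k\<in>{1..K}. \<beta> k * (signal_inner M N kappa_signal (weighted_gam (\<rho> k)) + l * weight (\<rho> k)))"
      using feas q_le by (intro sum_mono mult_left_mono) (auto simp: lifted_feasible_def)
    also have "\<dots> = signal_inner M N kappa_signal y + l * W"
      unfolding y_def W_def signal_inner_sum_right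
      by (simp add: distrib_left sum.distrib sum_distrib_left mult.left_commute)
    also have "\<dots> \<le> C + l * (F0 / lam)"
      using y_corr W_le by linarith
    finally show ?thesis using q(1) by (simp add: pos_le_divide_eq mult.commute)
  qed
  moreover have "0 \<le> (C + l * (F0 / lam)) / q"
    using \<open>0 \<le> C\<close> \<open>0 \<le> F0\<close> q lam_pos by simp
  ultimately show ?thesis using that unfolding F0_def by blast
qed

lemma lifted_objective_cong:
  assumes "\<And>k. k \<in> {1..K} \<Longrightarrow> \<beta> k = \<beta>' k" and "\<And>k. k \<in> {1..K} \<Longrightarrow> \<rho> k = \<rho>' k"
  shows "lifted_objective \<beta> \<rho> = lifted_objective \<beta>' \<rho>'"
proof -
  have "(\<Sum>k\<in>{1..K}. \<beta> k * weighted_gam (\<rho> k) m n) = (\<Sum>k\<in>{1..K}. \<beta>' k * weighted_gam (\<rho>' k) m n)"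
    for m n by (rule sum.cong) (simp_all add: assms)
  moreover have "(\<Sum>k\<in>{1..K}. \<beta> k * weight (\<rho> k)) = (\<Sum>k\<in>{1..K}. \<beta>' k * weight (\<rho>' k))"
    by (rule sum.cong) (simp_all add: assms)
  ultimately show ?thesis unfolding lifted_objective_def by simp
qed

lemma continuous_on_lifted_objective:
  "continuous_on S (\<lambda>z. lifted_objective (\<lambda>k. fst (z k)) (\<lambda>k. snd (z k)))"
  unfolding lifted_objective_def sqnorm_def
  by (intro continuous_intros continuous_on_compose2[OF continuous_on_weighted_gam]
      continuous_on_compose2[OF continuous_on_weight]) auto

lemma lifted_minimum_exists:
  obtains \<beta> \<rho> where "lifted_feasible \<beta> \<rho>" and "lifted_objective \<beta> \<rho> \<le> 1/2 * sqnorm M N x"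
    and "\<And>\<beta>' \<rho>'. lifted_feasible \<beta>' \<rho>' \<Longrightarrow> lifted_objective \<beta> \<rho> \<le> lifted_objective \<beta>' \<rho>'"
proof -
  obtain B where "0 \<le> B" and B: "\<And>\<beta> \<rho>. lifted_feasible \<beta> \<rho> \<Longrightarrow>
      lifted_objective \<beta> \<rho> \<le> 1/2 * sqnorm M N x \<Longrightarrow> (\<Sum>k\<in>{1..K}. \<beta> k) \<le> B"
    using lifted_amplitude_bound by blast
  obtain p0 where "p0 \<in> D" using Cset_nonempty Cset_eq by auto
  \<comment> \<open>Coordinates outside \<open>{1..K}\<close> are frozen so that \<open>Z\<close> is compact in the product topology.\<close>
  define Z where "Z = PiE UNIV (\<lambda>k. if k \<in> {1..K} then {0..B} \<times> D else {(0, p0)})"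
  define G where "G z = lifted_objective (\<lambda>k. fst (z k)) (\<lambda>k. snd (z k))" for z
  have "compact Z"
    unfolding Z_def by (rule compact_PiE_UNIV) (auto intro!: compact_Times compact_D)
  moreover have "(\<lambda>k. (0, p0)) \<in> Z"
    unfolding Z_def using \<open>0 \<le> B\<close> \<open>p0 \<in> D\<close> by auto
  ultimately obtain zs where "zs \<in> Z" and zs_min: "\<And>z. z \<in> Z \<Longrightarrow> G zs \<le> G z"
    using continuous_attains_inf[of Z G] continuous_on_lifted_objective unfolding G_def by blast
  have "zs k \<in> (if k \<in> {1..K} then {0..B} \<times> D else {(0, p0)})" for k
    using \<open>zs \<in> Z\<close> unfolding Z_def by (rule PiE_mem) simp
  then have feas: "lifted_feasible (\<lambda>k. fst (zs k)) (\<lambda>k. snd (zs k))"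
    unfolding lifted_feasible_def by (metis atLeastAtMost_iff mem_Times_iff)
  have below: "G zs \<le> 1/2 * sqnorm M N x"
    using zs_min[OF \<open>(\<lambda>k. (0, p0)) \<in> Z\<close>] by (simp add: G_def lifted_objective_def)
  have "G zs \<le> lifted_objective \<beta>' \<rho>'" if feas': "lifted_feasible \<beta>' \<rho>'" for \<beta>' \<rho>'
  proof (cases "lifted_objective \<beta>' \<rho>' \<le> 1/2 * sqnorm M N x")
    case True
    define z where "z k = (if k \<in> {1..K} then (\<beta>' k, \<rho>' k) else (0, p0))" for k
    have "\<beta>' k \<le> B" if "k \<in> {1..K}" for k
      using member_le_sum[OF that, of \<beta>'] B[OF feas' True] feas'
      unfolding lifted_feasible_def by fastforce
    then have "z \<in> Z"
      using feas' \<open>p0 \<in> D\<close> unfolding Z_def z_def lifted_feasible_def by auto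
    moreover have "G z = lifted_objective \<beta>' \<rho>'"
      unfolding G_def z_def by (rule lifted_objective_cong) auto
    ultimately show ?thesis using zs_min by fastforce
  qed (use below in auto)
  then show ?thesis using that feas below unfolding G_def by blast
qed

lemma lifted_feasible_lift:
  assumes "feasible c fs N mic M K a r"
  shows "lifted_feasible (\<lambda>k. a k / weight (r k)) r"
  using assms weight_nonneg unfolding feasible_def lifted_feasible_def Cset_eq by auto

lemma objective_eq_lifted:
  assumes "feasible c fs N mic M K a r"
  shows "objective \<kappa> c fs mic M N K x lam a r = lifted_objective (\<lambda>k. a k / weight (r k)) r"
proof -
  have notE: "r k \<notin> E" if "k \<in> {1..K}" for k
    using assms that unfolding feasible_def Cset_eq by auto
  then have pos: "0 < weight (r k)" if "k \<in> {1..K}" for k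
    using weight_pos that by blast
  have "a k * gam \<kappa> c fs mic (r k) m n = a k / weight (r k) * weighted_gam (r k) m n"
    if "k \<in> {1..K}" and "m \<in> {1..M}" for k m n
    unfolding weight_mult_gam[OF that(2) notE[OF that(1)], symmetric] using pos[OF that(1)] by simp
  then have "(\<Sum>k\<in>{1..K}. a k * gam \<kappa> c fs mic (r k) m n)
      = (\<Sum>k\<in>{1..K}. a k / weight (r k) * weighted_gam (r k) m n)" if "m \<in> {1..M}" for m n
    using that by (intro sum.cong) auto
  then have "sqnorm M N (\<lambda>m n. x m n - (\<Sum>k\<in>{1..K}. a k * gam \<kappa> c fs mic (r k) m n))
      = sqnorm M N (\<lambda>m n. x m n - (\<Sum>k\<in>{1..K}. a k / weight (r k) * weighted_gam (r k) m n))"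
    by (intro sqnorm_cong) auto
  moreover have "(\<Sum>k\<in>{1..K}. a k) = (\<Sum>k\<in>{1..K}. a k / weight (r k) * weight (r k))"
    using pos by (intro sum.cong) (simp_all add: less_imp_neq[symmetric])
  ultimately show ?thesis
    unfolding objective_def lifted_objective_def by simp
qed

lemma signal_inner_weighted_gam_at_E_nonpos:
  assumes "\<And>m. m \<in> {1..M} \<Longrightarrow> (\<Sum>n\<in>{0..<N}. y m n * \<kappa> (real n / fs)) \<le> 0" and "p \<in> E"
  shows "signal_inner M N y (weighted_gam p) \<le> 0"
  unfolding signal_inner_def
proof (rule sum_nonpos)
  fix m assume "m \<in> {1..M}"
  define P where "P = (\<Prod>q\<in>E - {p}. norm (p - q)) / (4 * pi)"
  have "0 \<le> P" unfolding P_def by (simp add: prod_nonneg)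
  have "weighted_gam p m n = (if mic m = p then P * \<kappa> (real n / fs) else 0)" for n
    unfolding weighted_gam_at_E[OF assms(2)] P_def by simp
  then have "(\<Sum>n\<in>{0..<N}. y m n * weighted_gam p m n)
      = (if mic m = p then P * (\<Sum>n\<in>{0..<N}. y m n * \<kappa> (real n / fs)) else 0)"
    by (simp add: sum_distrib_left mult_ac)
  then show "(\<Sum>n\<in>{0..<N}. y m n * weighted_gam p m n) \<le> 0"
    using assms(1)[OF \<open>m \<in> {1..M}\<close>] \<open>0 \<le> P\<close> by (simp add: mult_nonneg_nonpos)
qed

end

locale source_problem_mu_bound = source_problem +
  assumes mu_bound:
    "(phi \<kappa> c fs N < 0 \<and>
        (\<forall>m\<in>{1..M}. mu \<kappa> fs N x m \<le> phi \<kappa> c fs N / (2 * lam) * sqnorm M N x))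
     \<or> (phi \<kappa> c fs N \<ge> 0 \<and> (\<forall>m\<in>{1..M}. mu \<kappa> fs N x m \<le> 0))"
begin

lemma mu_le_phi_mult:
  assumes "0 \<le> A" and "lam * A \<le> 1/2 * sqnorm M N x" and "m \<in> {1..M}"
  shows "mu \<kappa> fs N x m \<le> phi \<kappa> c fs N * A"
  using mu_bound
proof
  let ?\<phi> = "phi \<kappa> c fs N"
  assume neg: "?\<phi> < 0 \<and> (\<forall>m\<in>{1..M}. mu \<kappa> fs N x m \<le> ?\<phi> / (2 * lam) * sqnorm M N x)"
  have "A \<le> sqnorm M N x / (2 * lam)"
    using assms(2) lam_pos by (simp add: pos_le_divide_eq mult.commute)
  have "mu \<kappa> fs N x m \<le> ?\<phi> * (sqnorm M N x / (2 * lam))"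
    using neg assms(3) by simp
  also have "\<dots> \<le> ?\<phi> * A"
    using neg \<open>A \<le> sqnorm M N x / (2 * lam)\<close> by (intro mult_left_mono_neg) auto
  finally show ?thesis .
next
  assume "phi \<kappa> c fs N \<ge> 0 \<and> (\<forall>m\<in>{1..M}. mu \<kappa> fs N x m \<le> 0)"
  then show ?thesis using assms(1,3) by (metis mult_nonneg_nonneg order_trans)
qed

lemma residual_kernel_corr_nonpos:
  assumes feas: "feasible c fs N mic M K a r"
    and amp: "lam * (\<Sum>k\<in>{1..K}. a k) \<le> 1/2 * sqnorm M N x" and m: "m \<in> {1..M}"
  shows "(\<Sum>n\<in>{0..<N}. (x m n - (\<Sum>k\<in>{1..K}. a k * gam \<kappa> c fs mic (r k) m n)) * \<kappa> (real n / fs)) \<le> 0"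
proof -
  let ?corr = "\<lambda>k. \<Sum>n\<in>{0..<N}. gam \<kappa> c fs mic (r k) m n * \<kappa> (real n / fs)"
  have "phi \<kappa> c fs N \<le> ?corr k" if "k \<in> {1..K}" for k
  proof (rule phi_le_sum_gam[OF c_pos N_ge_1 \<kappa>_continuous \<kappa>_bounded \<kappa>_0_pos])
    have "r k \<in> D - E"
      using feas that unfolding feasible_def Cset_eq by blast
    then show "r k \<noteq> mic m"
      using mic_in_E[OF m] by auto
  qed
  then have "(\<Sum>k\<in>{1..K}. a k * phi \<kappa> c fs N) \<le> (\<Sum>k\<in>{1..K}. a k * ?corr k)"
    using feas unfolding feasible_def by (intro sum_mono mult_left_mono) auto
  moreover have "mu \<kappa> fs N x m \<le> phi \<kappa> c fs N * (\<Sum>k\<in>{1..K}. a k)"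
    using feas amp m unfolding feasible_def by (intro mu_le_phi_mult sum_nonneg) auto
  moreover have "(\<Sum>n\<in>{0..<N}. (x m n - (\<Sum>k\<in>{1..K}. a k * gam \<kappa> c fs mic (r k) m n)) * \<kappa> (real n / fs))
      = mu \<kappa> fs N x m - (\<Sum>k\<in>{1..K}. a k * ?corr k)"
    unfolding mu_def left_diff_distrib sum_subtractf sum_distrib_left sum_distrib_right
    by (simp add: sum.swap[where A = "{0..<N}"] mult.assoc)
  ultimately show ?thesis
    by (simp add: sum_distrib_left mult.commute)
qed

lemma lifted_point_retracts:
  assumes feas: "lifted_feasible \<beta> \<rho>" and below: "lifted_objective \<beta> \<rho> \<le> 1/2 * sqnorm M N x"
  obtains a r where "feasible c fs N mic M K a r"
    and "objective \<kappa> c fs mic M N K x lam a r \<le> lifted_objective \<beta> \<rho>"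
proof -
  obtain p0 where p0: "p0 \<in> Cset c fs N mic M" using Cset_nonempty by auto
  define a where "a k = (if \<rho> k \<in> E then 0 else \<beta> k * weight (\<rho> k))" for k
  define r where "r k = (if \<rho> k \<in> E then p0 else \<rho> k)" for k
  define res where "res m n = x m n - (\<Sum>k\<in>{1..K}. a k * gam \<kappa> c fs mic (r k) m n)" for m n
  define S where "S m n = (\<Sum>k\<in>{1..K}. (if \<rho> k \<in> E then \<beta> k else 0) * weighted_gam (\<rho> k) m n)"
    for m n
  have feasible: "feasible c fs N mic M K a r"
    using feas p0 weight_nonneg
    unfolding feasible_def lifted_feasible_def Cset_eq a_def r_def by auto
  have sum_a: "(\<Sum>k\<in>{1..K}. \<beta> k * weight (\<rho> k)) = (\<Sum>k\<in>{1..K}. a k)"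
    unfolding a_def using weight_eq_0_iff by (intro sum.cong) auto
  have "x m n - (\<Sum>k\<in>{1..K}. \<beta> k * weighted_gam (\<rho> k) m n) = res m n - S m n"
    if "m \<in> {1..M}" for m n
  proof -
    have "\<beta> k * weighted_gam (\<rho> k) m n = a k * gam \<kappa> c fs mic (r k) m n
        + (if \<rho> k \<in> E then \<beta> k else 0) * weighted_gam (\<rho> k) m n" for k
      using weight_mult_gam[OF that, of "\<rho> k" n] unfolding a_def r_def by auto
    then show ?thesis unfolding res_def S_def by (simp add: sum.distrib)
  qed
  then have "sqnorm M N (\<lambda>m n. x m n - (\<Sum>k\<in>{1..K}. \<beta> k * weighted_gam (\<rho> k) m n))
      = sqnorm M N (\<lambda>m n. res m n - S m n)"
    by (intro sqnorm_cong) auto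
  then have lifted_eq:
    "lifted_objective \<beta> \<rho> = 1/2 * sqnorm M N (\<lambda>m n. res m n - S m n) + lam * (\<Sum>k\<in>{1..K}. a k)"
    unfolding lifted_objective_def sum_a by simp
  then have "lam * (\<Sum>k\<in>{1..K}. a k) \<le> 1/2 * sqnorm M N x"
    using below sqnorm_nonneg[of M N "\<lambda>m n. res m n - S m n"] by linarith
  then have "(\<Sum>n\<in>{0..<N}. res m n * \<kappa> (real n / fs)) \<le> 0" if "m \<in> {1..M}" for m
    unfolding res_def by (rule residual_kernel_corr_nonpos[OF feasible _ that])
  then have "signal_inner M N res (weighted_gam p) \<le> 0" if "p \<in> E" for p
    using signal_inner_weighted_gam_at_E_nonpos that by blast
  then have "signal_inner M N res S \<le> 0"
    unfolding S_def signal_inner_sum_right using feas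
    by (intro sum_nonpos) (auto simp: lifted_feasible_def intro: mult_nonneg_nonpos)
  then have "objective \<kappa> c fs mic M N K x lam a r \<le> lifted_objective \<beta> \<rho>"
    unfolding lifted_eq objective_def res_def[symmetric] using sqnorm_le_diff by simp
  with feasible that show ?thesis by blast
qed

end

theorem theorem2:
  fixes c fs lam :: real and M N K :: nat
    and mic :: "nat \<Rightarrow> real^3" and x :: "nat \<Rightarrow> nat \<Rightarrow> real"
    and \<kappa> :: "real \<Rightarrow> real"
  assumes "c > 0" and "fs > 0" and "M \<ge> 1" and "N \<ge> 1" and "K \<ge> 1"
    and "lam > 0"
    and "continuous_on UNIV \<kappa>" and "bounded (range \<kappa>)" and "\<kappa> 0 > 0"
    and "Cset c fs N mic M \<noteq> {}"
    and "(phi \<kappa> c fs N < 0 \<and>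
          (\<forall>m\<in>{1..M}. mu \<kappa> fs N x m \<le> phi \<kappa> c fs N / (2 * lam) * sqnorm M N x))
       \<or> (phi \<kappa> c fs N \<ge> 0 \<and> (\<forall>m\<in>{1..M}. mu \<kappa> fs N x m \<le> 0))"
  shows "\<exists>a r. feasible c fs N mic M K a r \<and>
           (\<forall>a' r'. feasible c fs N mic M K a' r' \<longrightarrow>
              objective \<kappa> c fs mic M N K x lam a r \<le> objective \<kappa> c fs mic M N K x lam a' r')"
proof -
  interpret source_problem_mu_bound \<kappa> c fs lam M N K mic x
    by unfold_locales (use assms in auto)
  obtain \<beta> \<rho> where feas: "lifted_feasible \<beta> \<rho>" and below: "lifted_objective \<beta> \<rho> \<le> 1/2 * sqnorm M N x"
    and min: "\<And>\<beta>' \<rho>'. lifted_feasible \<beta>' \<rho>' \<Longrightarrow> lifted_objective \<beta> \<rho> \<le> lifted_objective \<beta>' \<rho>'"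
    using lifted_minimum_exists by blast
  obtain a r where "feasible c fs N mic M K a r"
    and "objective \<kappa> c fs mic M N K x lam a r \<le> lifted_objective \<beta> \<rho>"
    using lifted_point_retracts[OF feas below] by blast
  moreover have "lifted_objective \<beta> \<rho> \<le> objective \<kappa> c fs mic M N K x lam a' r'"
    if "feasible c fs N mic M K a' r'" for a' r'
    using min[OF lifted_feasible_lift[OF that]] objective_eq_lifted[OF that] by simp
  ultimately show ?thesis by force
qed

end
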